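(* Let $a_1,a_2\ge0$ and $D=D_{a_1,a_2}$. For any horizontal edge $h\in D_1$ and vertical edge $v_j\in D_2$ such that $h$ comes before $v_j$ along $D$ (traversed from $(0,0)$ to $(a_1,a_2)$), letting $hv_j$ be the subpath of $D$ from $h$ to $v_j$ inclusive, we have $$a_1\big(|(hv_j)_2|-1\big)<a_2\,|(hv_j)_1|.$$
   Context: $D=D_{a_1,a_2}$ is the maximal Dyck path: the lattice path of unit East and North steps from $(0,0)$ to $(a_1,a_2)$ staying weakly below the diagonal of the rectangle $[0,a_1]\times[0,a_2]$ and closest to it (every lattice point above $D$ is strictly above the diagonal). $D_1$ is its set of horizontal edges, $D_2=\{v_1,\dots,v_{a_2}\}$ its vertical edges, $v_j$ being the North step ending at $y$-coordinate $j$. For a subpath $P$, $(P)_1$ and $(P)_2$ denote its sets of horizontal and vertical edges. *)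

theory Defs
  imports Complex_Main
begin

text \<open>A lattice path from (0,0) is encoded as a list of unit steps:
  True = East (horizontal) step, False = North (vertical) step.
  Edge number k of the path is the k-th list entry (0-based).\<close>

text \<open>x-coordinate of the North step ending at height j in the maximal Dyck path:
  the least x with (x,j) weakly below the diagonal, i.e. ceiling (j*a1/a2).\<close>
definition dyck_col :: "nat \<Rightarrow> nat \<Rightarrow> nat \<Rightarrow> nat" where
  "dyck_col a1 a2 j = nat \<lceil>real j * real a1 / real a2\<rceil>"

definition max_dyck :: "nat \<Rightarrow> nat \<Rightarrow> bool list" where
  "max_dyck a1 a2 =
     concat (map (\<lambda>j. replicate (dyck_col a1 a2 j - dyck_col a1 a2 (j - 1)) True @ [False])
                 [1..<Suc a2])
     @ replicate (a1 - dyck_col a1 a2 a2) True"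

definition subpath :: "bool list \<Rightarrow> nat \<Rightarrow> nat \<Rightarrow> bool list" where
  "subpath P i k = take (Suc k - i) (drop i P)"

definition n_horiz :: "bool list \<Rightarrow> nat" where
  "n_horiz P = length (filter (\<lambda>s. s) P)"

definition n_vert :: "bool list \<Rightarrow> nat" where
  "n_vert P = length (filter (\<lambda>s. \<not> s) P)"

definition vert_edge :: "bool list \<Rightarrow> nat \<Rightarrow> nat" where
  "vert_edge P j = (THE k. k < length P \<and> \<not> P ! k \<and> n_vert (take (Suc k) P) = j)"

end

theory Submission
  imports Defs
begin

text \<open>
  Let the subpath start at the horizontal edge with index i and end at v_j, and let the prefix
  before edge i contain x horizontal and v vertical edges. A horizontal edge at height v of the
  maximal Dyck path lies left of column \<lceil>(v+1) a1/a2\<rceil>, so x a2 < (v+1) a1; the prefix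
  ending with v_j has \<lceil>j a1/a2\<rceil> horizontal edges, at least j a1/a2 many. The subpath has
  j - v vertical and \<lceil>j a1/a2\<rceil> - x horizontal edges, and subtracting the two bounds gives
  the claim.
\<close>

lemma n_horiz_append [simp]: "n_horiz (xs @ ys) = n_horiz xs + n_horiz ys"
  and n_vert_append [simp]: "n_vert (xs @ ys) = n_vert xs + n_vert ys"
  and n_horiz_replicate_True [simp]: "n_horiz (replicate r True) = r"
  and n_vert_replicate_True [simp]: "n_vert (replicate r True) = 0"
  and n_horiz_simps [simp]: "n_horiz [] = 0" "n_horiz [False] = 0" "n_horiz [True] = 1"
  and n_vert_simps [simp]: "n_vert [] = 0" "n_vert [False] = 1" "n_vert [True] = 0"
  by (simp_all add: n_horiz_def n_vert_def)

lemma n_vert_take_mono: "m \<le> m' \<Longrightarrow> n_vert (take m P) \<le> n_vert (take m' P)"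
  using take_add[of m "m' - m" P] by simp

lemma n_vert_take_Suc_False:
  "k < length P \<Longrightarrow> \<not> P ! k \<Longrightarrow> n_vert (take (Suc k) P) = Suc (n_vert (take k P))"
  by (simp add: take_Suc_conv_app_nth)

lemma vert_step_exists:
  assumes "1 \<le> j" "j \<le> n_vert (take m P)"
  shows "\<exists>k. k < length P \<and> \<not> P ! k \<and> n_vert (take (Suc k) P) = j"
  using assms(2)
proof (induction m)
  case 0
  then show ?case using assms(1) by simp
next
  case (Suc m)
  show ?case
  proof (cases "j \<le> n_vert (take m P)")
    case True
    then show ?thesis using Suc.IH by blast
  next
    case False
    have "m < length P"
    proof (rule ccontr)
      assume "\<not> m < length P"
      then have "take (Suc m) P = take m P" by simp
      then show False using Suc.prems False by simp
    qed
    then have "n_vert (take (Suc m) P) = n_vert (take m P) + n_vert [P ! m]"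
      by (simp add: take_Suc_conv_app_nth)
    then have "\<not> P ! m" "n_vert (take (Suc m) P) = j"
      using Suc.prems False by (cases "P ! m", simp_all)+
    then show ?thesis using \<open>m < length P\<close> by blast
  qed
qed

lemma vert_step_unique:
  assumes "k < length P" "\<not> P ! k" "k' < length P" "\<not> P ! k'"
    and "n_vert (take (Suc k) P) = n_vert (take (Suc k') P)"
  shows "k = k'"
proof -
  have less: "n_vert (take (Suc k) P) < n_vert (take (Suc k') P)"
    if "k < k'" "k' < length P" "\<not> P ! k'" for k k'
    using that n_vert_take_mono[of "Suc k" k' P] n_vert_take_Suc_False[of k' P] by simp
  show ?thesis
    using less[of k k'] less[of k' k] assms by (cases k k' rule: linorder_cases) auto
qed

lemma vert_edge:
  assumes "1 \<le> j" "j \<le> n_vert P"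
  shows "vert_edge P j < length P" "\<not> P ! vert_edge P j"
    and "n_vert (take (Suc (vert_edge P j)) P) = j"
proof -
  have "\<exists>!k. k < length P \<and> \<not> P ! k \<and> n_vert (take (Suc k) P) = j"
    using vert_step_exists[of j "length P" P] vert_step_unique assms by auto
  from theI'[OF this] show "vert_edge P j < length P" "\<not> P ! vert_edge P j"
    "n_vert (take (Suc (vert_edge P j)) P) = j"
    unfolding vert_edge_def by auto
qed

lemma take_Suc_eq_take_append_subpath:
  "i \<le> k \<Longrightarrow> take (Suc k) P = take i P @ subpath P i k"
  unfolding subpath_def using take_add[of i "Suc k - i" P] by simp

definition staircase :: "(nat \<Rightarrow> nat) \<Rightarrow> nat \<Rightarrow> bool list" where
  "staircase c n = concat (map (\<lambda>j. replicate (c j - c (j - 1)) True @ [False]) [1..<Suc n])"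

lemma staircase_0 [simp]: "staircase c 0 = []"
  by (simp add: staircase_def)

lemma staircase_Suc:
  "staircase c (Suc n) = staircase c n @ replicate (c (Suc n) - c n) True @ [False]"
  by (simp add: staircase_def)

lemma staircase_counts:
  assumes "mono c" "c 0 = 0"
  shows "n_horiz (staircase c n) = c n" "n_vert (staircase c n) = n"
    and "length (staircase c n) = c n + n"
proof -
  have "n_horiz (staircase c n) = c n \<and> n_vert (staircase c n) = n
        \<and> length (staircase c n) = c n + n"
  proof (induction n)
    case 0
    then show ?case using assms(2) by simp
  next
    case (Suc n)
    have "c n \<le> c (Suc n)" using assms(1) by (simp add: monoD)
    then show ?case using Suc by (simp add: staircase_Suc)
  qed
  then show "n_horiz (staircase c n) = c n" "n_vert (staircase c n) = n"
    "length (staircase c n) = c n + n" by auto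
qed

text \<open>Edge m starts at the lattice point (x, v); it is horizontal iff x has not yet reached
  the column c (v+1) in which the staircase climbs to height v+1.\<close>
lemma staircase_nth:
  assumes "mono c" "c 0 = 0" "m < length (staircase c n)"
  defines "x \<equiv> n_horiz (take m (staircase c n))"
    and "v \<equiv> n_vert (take m (staircase c n))"
  shows "x \<le> c (Suc v) \<and> (staircase c n ! m \<longleftrightarrow> x < c (Suc v))"
  using assms(3) unfolding x_def v_def
proof (induction n arbitrary: m)
  case 0
  then show ?case by simp
next
  case (Suc n)
  let ?P = "staircase c n" and ?d = "c (Suc n) - c n"
  show ?case
  proof (cases "m < length ?P")
    case True
    then show ?thesis using Suc.IH by (simp add: staircase_Suc nth_append)
  next
    case False
    then obtain r where m: "m = length ?P + r" by (metis le_add_diff_inverse not_less)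
    have "c n \<le> c (Suc n)" using assms(1) by (simp add: monoD)
    then have counts: "n_horiz ?P + ?d = c (Suc n)" "n_vert ?P = n"
      using staircase_counts[OF assms(1,2)] by auto
    have "r \<le> ?d" using Suc.prems m by (simp add: staircase_Suc)
    then consider "r < ?d" | "r = ?d" by linarith
    then show ?thesis
      using m counts by cases (auto simp add: staircase_Suc nth_append)
  qed
qed

lemma dyck_col_mono: "mono (dyck_col a1 a2)"
  unfolding dyck_col_def
  by (intro monoI nat_mono ceiling_mono divide_right_mono mult_right_mono) auto

lemma dyck_col_0 [simp]: "dyck_col a1 a2 0 = 0"
  by (simp add: dyck_col_def)

lemma max_dyck_eq_staircase: "0 < a2 \<Longrightarrow> max_dyck a1 a2 = staircase (dyck_col a1 a2) a2"
  by (simp add: max_dyck_def staircase_def dyck_col_def)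

lemma less_dyck_col_iff: "0 < a2 \<Longrightarrow> x < dyck_col a1 a2 j \<longleftrightarrow> x * a2 < j * a1"
proof -
  assume "0 < a2"
  have "x < dyck_col a1 a2 j \<longleftrightarrow> real x < real j * real a1 / real a2"
    by (simp add: dyck_col_def zless_nat_eq_int_zless less_ceiling_iff)
  also have "\<dots> \<longleftrightarrow> x * a2 < j * a1"
    using \<open>0 < a2\<close> by (simp add: pos_less_divide_eq flip: of_nat_mult)
  finally show ?thesis .
qed

lemma mult_le_dyck_col: "0 < a2 \<Longrightarrow> j * a1 \<le> dyck_col a1 a2 j * a2"
  using less_dyck_col_iff[of a2 "dyck_col a1 a2 j" a1 j] by simp

lemma subpath_count_bound:
  fixes a1 a2 x v y j :: nat
  assumes "x * a2 < Suc v * a1" "j * a1 \<le> y * a2" "v < j" "x \<le> y"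
  shows "int a1 * (int (j - v) - 1) < int a2 * int (y - x)"
proof -
  have "int x * int a2 < int (Suc v) * int a1" "int j * int a1 \<le> int y * int a2"
    using assms(1,2) by (simp_all only: of_nat_mult[symmetric] of_nat_less_iff of_nat_le_iff)
  then show ?thesis using assms(3,4) by (simp add: of_nat_diff algebra_simps)
qed

theorem corollary3p3:
  fixes a1 a2 i j :: nat
  defines "D \<equiv> max_dyck a1 a2"
  assumes "j \<in> {1..a2}"
    and "i < length D" and "D ! i"
    and "i < vert_edge D j"
  shows "int a1 * (int (n_vert (subpath D i (vert_edge D j))) - 1)
           < int a2 * int (n_horiz (subpath D i (vert_edge D j)))"
proof -
  let ?c = "dyck_col a1 a2" and ?k = "vert_edge D j"
  have a2: "0 < a2" and D: "D = staircase ?c a2" and "n_vert D = a2"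
    using assms(2) staircase_counts[OF dyck_col_mono] by (auto simp: D_def max_dyck_eq_staircase)
  then have k: "?k < length D" "\<not> D ! ?k" "n_vert (take (Suc ?k) D) = j"
    using vert_edge[of j D] assms(2) by auto
  define x where "x = n_horiz (take i D)"
  define v where "v = n_vert (take i D)"
  have x_bound: "x * a2 < Suc v * a1"
    using staircase_nth[OF dyck_col_mono[of a1 a2] dyck_col_0, where m = i and n = a2] assms(3,4) a2
    by (simp add: D x_def v_def less_dyck_col_iff)
  have horiz_k: "n_horiz (take (Suc ?k) D) = ?c j"
    using staircase_nth[OF dyck_col_mono[of a1 a2] dyck_col_0, where m = ?k and n = a2] k
    by (simp add: D n_vert_take_Suc_False take_Suc_conv_app_nth)
  have "v < j"
    using n_vert_take_mono[of i ?k D] n_vert_take_Suc_False[of ?k D] assms(5) k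
    by (simp add: v_def)
  have "take (Suc ?k) D = take i D @ subpath D i ?k"
    using assms(5) by (simp add: take_Suc_eq_take_append_subpath)
  then have "x \<le> ?c j" "n_horiz (subpath D i ?k) = ?c j - x" "n_vert (subpath D i ?k) = j - v"
    using horiz_k k(3) by (simp_all add: x_def v_def)
  then show ?thesis
    using subpath_count_bound[OF x_bound mult_le_dyck_col[OF a2] \<open>v < j\<close>] by simp
qed

end
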